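(* Let $B=\bigoplus_{i\in\mathbb{Z}}B_i$ be a $\mathbb{Z}$-graded integral domain with $e(B)=1$. For each $d\in\mathbb{N}\setminus\{0,1\}$ we have $\mathcal{X}_d\neq\emptyset$, and the following are equivalent: (a) no height-$1$ prime ideal of $B$ contains $\mathcal{X}_d$; (b) $\gcd(e(B/\mathfrak{p}),d)=1$ for every homogeneous prime ideal $\mathfrak{p}$ of $B$ of height $1$; (c) $d\in\Pi^*(B)$.
   Context: For a $\mathbb{Z}$-graded domain $C$, $e(C)=\gcd\{i\in\mathbb{Z}:C_i\neq0\}$. $\mathcal{X}_d$ is the set of nonzero homogeneous $x\in B$ with $\gcd(\deg x,d)=1$. $\Pi(B)$ is the set of primes $p$ with $p\mid e(B/\mathfrak{p})$ for some homogeneous height-$1$ prime $\mathfrak{p}$ of $B$; $\Pi^*(B)$ is the set of positive integers not divisible by any element of $\Pi(B)$. *)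

theory Defs
  imports Main "HOL-Computational_Algebra.Primes"
begin

definition graded_domain :: "(int \<Rightarrow> 'a::idom set) \<Rightarrow> bool" where
  "graded_domain G \<longleftrightarrow>
     (\<forall>i. 0 \<in> G i \<and> (\<forall>x\<in>G i. \<forall>y\<in>G i. x + y \<in> G i) \<and> (\<forall>x\<in>G i. - x \<in> G i)) \<and>
     (\<forall>i j. \<forall>x\<in>G i. \<forall>y\<in>G j. x * y \<in> G (i + j)) \<and>
     (\<forall>x. \<exists>!f. finite {i. f i \<noteq> 0} \<and> (\<forall>i. f i \<in> G i) \<and> x = sum f {i. f i \<noteq> 0})"

definition hcomp :: "(int \<Rightarrow> 'a::idom set) \<Rightarrow> 'a \<Rightarrow> int \<Rightarrow> 'a" where
  "hcomp G x = (THE f. finite {i. f i \<noteq> 0} \<and> (\<forall>i. f i \<in> G i) \<and> x = sum f {i. f i \<noteq> 0})"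

definition homogeneous :: "(int \<Rightarrow> 'a::idom set) \<Rightarrow> 'a \<Rightarrow> bool" where
  "homogeneous G x \<longleftrightarrow> (\<exists>i. x \<in> G i)"

definition e_grad :: "(int \<Rightarrow> 'a::idom set) \<Rightarrow> int" where
  "e_grad G = Gcd {i. G i \<noteq> {0}}"

definition is_ideal :: "'a::comm_ring_1 set \<Rightarrow> bool" where
  "is_ideal I \<longleftrightarrow> 0 \<in> I \<and> (\<forall>x\<in>I. \<forall>y\<in>I. x + y \<in> I) \<and> (\<forall>x\<in>I. \<forall>r. r * x \<in> I)"

definition prime_ideal :: "'a::comm_ring_1 set \<Rightarrow> bool" where
  "prime_ideal P \<longleftrightarrow> is_ideal P \<and> P \<noteq> UNIV \<and> (\<forall>a b. a * b \<in> P \<longrightarrow> a \<in> P \<or> b \<in> P)"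

definition prime_chain_to :: "'a::comm_ring_1 set \<Rightarrow> nat \<Rightarrow> bool" where
  "prime_chain_to P n \<longleftrightarrow> (\<exists>c :: nat \<Rightarrow> 'a set.
      (\<forall>i\<le>n. prime_ideal (c i)) \<and> (\<forall>i<n. c i \<subset> c (Suc i)) \<and> c n = P)"

definition height_one :: "'a::comm_ring_1 set \<Rightarrow> bool" where
  "height_one P \<longleftrightarrow> prime_ideal P \<and> prime_chain_to P 1 \<and> \<not> prime_chain_to P 2"

definition homogeneous_ideal :: "(int \<Rightarrow> 'a::idom set) \<Rightarrow> 'a set \<Rightarrow> bool" where
  "homogeneous_ideal G P \<longleftrightarrow> is_ideal P \<and> (\<forall>x\<in>P. \<forall>i. hcomp G x i \<in> P)"

text \<open>e(B/P): the quotient B/P is graded by (B/P)_i = image of B_i, so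
  (B/P)_i is nonzero iff B_i is not contained in P.\<close>
definition e_quot :: "(int \<Rightarrow> 'a::idom set) \<Rightarrow> 'a set \<Rightarrow> int" where
  "e_quot G P = Gcd {i. \<not> G i \<subseteq> P}"

definition X_set :: "(int \<Rightarrow> 'a::idom set) \<Rightarrow> nat \<Rightarrow> 'a set" where
  "X_set G d = {x. x \<noteq> 0 \<and> (\<exists>i. x \<in> G i \<and> coprime i (int d))}"

definition Pi_set :: "(int \<Rightarrow> 'a::idom set) \<Rightarrow> nat set" where
  "Pi_set G = {p. prime p \<and> (\<exists>P. homogeneous_ideal G P \<and> height_one P \<and> int p dvd e_quot G P)}"

definition Pi_star :: "(int \<Rightarrow> 'a::idom set) \<Rightarrow> nat set" where
  "Pi_star G = {n. n > 0 \<and> (\<forall>p\<in>Pi_set G. \<not> p dvd n)}"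

end

theory Submission
  imports Defs
begin

(* For a prime P, the degrees i with B_i not contained in P form an additive semigroup (B/P is
   a domain) with gcd e(B/P), and a semigroup of integers whose gcd is coprime to d contains an
   element coprime to d.  Hence P contains X_d exactly when e(B/P) is not coprime to d; for
   P = 0 this shows that X_d is nonempty.  A height-one prime P containing X_d thus contains a
   nonzero homogeneous element, so the ideal P* generated by the homogeneous elements of P,
   which is again prime, is nonzero; from 0 < P* <= P and height one we get P = P*, so P is
   homogeneous.  This gives (a) <-> (b), and (b) <-> (c) rephrases coprimality through prime
   divisors. *)

lemma coprime_iff_no_common_prime_divisor:
  fixes a b :: "'a::factorial_semiring"
  assumes "b \<noteq> 0"
  shows "coprime a b \<longleftrightarrow> (\<forall>p. prime p \<longrightarrow> p dvd a \<longrightarrow> \<not> p dvd b)"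
proof
  assume "coprime a b"
  then show "\<forall>p. prime p \<longrightarrow> p dvd a \<longrightarrow> \<not> p dvd b"
    using coprime_common_divisor not_prime_unit by blast
next
  assume no_common: "\<forall>p. prime p \<longrightarrow> p dvd a \<longrightarrow> \<not> p dvd b"
  show "coprime a b"
  proof (rule coprimeI)
    fix c assume "c dvd a" "c dvd b"
    moreover have "c \<noteq> 0" using \<open>c dvd b\<close> assms by auto
    ultimately show "is_unit c"
      using no_common prime_divisor_exists[of c] dvd_trans by blast
  qed
qed

lemma coprime_int_iff_no_common_prime_divisor:
  fixes e :: int and d :: nat
  assumes "d \<noteq> 0"
  shows "coprime e (int d) \<longleftrightarrow> (\<forall>p. prime p \<longrightarrow> int p dvd e \<longrightarrow> \<not> p dvd d)"
proof -
  have "int d \<noteq> 0" using assms by simp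
  then have "coprime e (int d) \<longleftrightarrow> (\<forall>q. prime q \<longrightarrow> q dvd e \<longrightarrow> \<not> q dvd int d)"
    by (rule coprime_iff_no_common_prime_divisor)
  also have "\<dots> \<longleftrightarrow> (\<forall>p. prime p \<longrightarrow> int p dvd e \<longrightarrow> \<not> p dvd d)"
  proof (intro iffI allI impI)
    fix p :: nat
    assume no_common: "\<forall>q. prime q \<longrightarrow> q dvd e \<longrightarrow> \<not> q dvd int d" and "prime p" "int p dvd e"
    then show "\<not> p dvd d" using no_common[rule_format, of "int p"] by simp
  next
    fix q :: int
    assume no_common: "\<forall>p. prime p \<longrightarrow> int p dvd e \<longrightarrow> \<not> p dvd d" and "prime q" "q dvd e"
    moreover obtain p where "q = int p" using prime_ge_0_int[OF \<open>prime q\<close>] nonneg_int_cases by blast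
    ultimately show "\<not> q dvd int d" by simp
  qed
  finally show ?thesis .
qed

lemma semigroup_pos_multiple:
  fixes T :: "'a::semiring_1 set"
  assumes add_closed: "\<And>a b. a \<in> T \<Longrightarrow> b \<in> T \<Longrightarrow> a + b \<in> T" and "t \<in> T" and "n > 0"
  shows "of_nat n * t \<in> T"
  using \<open>n > 0\<close>
proof (induction n rule: nat_induct_non_zero)
  case 1
  then show ?case using \<open>t \<in> T\<close> by simp
next
  case (Suc n)
  then show ?case using add_closed[OF Suc.IH \<open>t \<in> T\<close>] by (simp add: algebra_simps)
qed

lemma semigroup_avoids_primes:
  fixes T Q :: "int set"
  assumes "T \<noteq> {}" and add_closed: "\<And>a b. a \<in> T \<Longrightarrow> b \<in> T \<Longrightarrow> a + b \<in> T"
    and "finite Q" and "\<And>p. p \<in> Q \<Longrightarrow> prime p" and "\<And>p. p \<in> Q \<Longrightarrow> \<exists>t\<in>T. \<not> p dvd t"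
  shows "\<exists>t\<in>T. \<forall>p\<in>Q. \<not> p dvd t"
  using assms(3-5)
proof (induction Q rule: finite_induct)
  case empty
  then show ?case using \<open>T \<noteq> {}\<close> by auto
next
  case (insert q Q)
  then obtain t where t: "t \<in> T" "\<forall>p\<in>Q. \<not> p dvd t" by auto
  obtain s where s: "s \<in> T" "\<not> q dvd s" using insert.prems by blast
  have q: "prime q" using insert.prems by simp
  show ?case
  proof (cases "q dvd t")
    case False
    then show ?thesis using t by auto
  next
    case True
    define M where "M = \<Prod>Q"
    have "M > 0" unfolding M_def using insert.prems prime_gt_0_int by (auto intro: prod_pos)
    then have "M * s \<in> T"
      using semigroup_pos_multiple[OF add_closed s(1), of "nat M"] by simp
    then have in_T: "t + M * s \<in> T" using add_closed t(1) by blast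
    have "\<not> p dvd t + M * s" if "p \<in> Q" for p
    proof -
      have "p dvd M" unfolding M_def using \<open>finite Q\<close> that by (rule dvd_prodI)
      then show ?thesis using t(2) that by (simp add: dvd_add_left_iff)
    qed
    moreover have "\<not> q dvd M"
    proof
      assume "q dvd M"
      then obtain p where "p \<in> Q" "q dvd p"
        using prime_dvd_prod_iff[OF \<open>finite Q\<close> q] by (auto simp: M_def)
      then have "q = p" using primes_dvd_imp_eq[OF q] insert.prems(1) by blast
      then show False using \<open>p \<in> Q\<close> \<open>q \<notin> Q\<close> by simp
    qed
    then have "\<not> q dvd t + M * s"
      using True s(2) q by (simp add: dvd_add_right_iff prime_dvd_mult_iff)
    ultimately show ?thesis using in_T by blast
  qed
qed

lemma semigroup_contains_coprime:
  fixes T :: "int set" and d :: int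
  assumes "T \<noteq> {}" and add_closed: "\<And>a b. a \<in> T \<Longrightarrow> b \<in> T \<Longrightarrow> a + b \<in> T"
    and "d \<noteq> 0" and "coprime (Gcd T) d"
  shows "\<exists>t\<in>T. coprime t d"
proof -
  have "\<exists>t\<in>T. \<not> p dvd t" if "p \<in> prime_factors d" for p
  proof (rule ccontr)
    assume "\<not> (\<exists>t\<in>T. \<not> p dvd t)"
    then have "p dvd Gcd T" by (auto intro: Gcd_greatest)
    moreover have "prime p" "p dvd d" using that by (auto simp: in_prime_factors_iff)
    ultimately show False
      using coprime_common_divisor[OF \<open>coprime (Gcd T) d\<close>] not_prime_unit by blast
  qed
  then obtain t where "t \<in> T" "\<forall>p\<in>prime_factors d. \<not> p dvd t"
    using semigroup_avoids_primes[OF \<open>T \<noteq> {}\<close> add_closed] by blast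
  then show ?thesis
    using coprime_iff_no_common_prime_divisor[OF \<open>d \<noteq> 0\<close>] prime_factorsI[OF \<open>d \<noteq> 0\<close>] by blast
qed

lemma sum_product_convolution:
  fixes u v :: "int \<Rightarrow> 'a::comm_semiring_0"
  assumes "finite A" "finite B" "\<And>j. j \<notin> B \<Longrightarrow> v j = 0"
  shows "sum u A * sum v B = (\<Sum>k\<in>(\<lambda>(i, j). i + j) ` (A \<times> B). \<Sum>i\<in>A. u i * v (k - i))"
proof -
  let ?K = "(\<lambda>(i, j). i + j) ` (A \<times> B)"
  have "(\<Sum>j\<in>B. u i * v j) = (\<Sum>k\<in>?K. u i * v (k - i))" if "i \<in> A" for i
  proof -
    have "(\<Sum>j\<in>B. u i * v j) = (\<Sum>k\<in>(+) i ` B. u i * v (k - i))"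
      by (simp add: sum.reindex)
    also have "\<dots> = (\<Sum>k\<in>?K. u i * v (k - i))"
    proof (rule sum.mono_neutral_left)
      show "finite ?K" using assms(1,2) by simp
      show "(+) i ` B \<subseteq> ?K"
      proof
        fix k assume "k \<in> (+) i ` B"
        then obtain j where "j \<in> B" "k = i + j" by blast
        then show "k \<in> ?K" using that by (intro rev_image_eqI[of "(i, j)"]) auto
      qed
      show "\<forall>k\<in>?K - (+) i ` B. u i * v (k - i) = 0"
      proof
        fix k assume "k \<in> ?K - (+) i ` B"
        then have "k - i \<notin> B" using image_eqI[of k "(+) i" "k - i" B] by auto
        then show "u i * v (k - i) = 0" using assms(3) by simp
      qed
    qed
    finally show ?thesis .
  qed
  then have "sum u A * sum v B = (\<Sum>i\<in>A. \<Sum>k\<in>?K. u i * v (k - i))"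
    by (simp add: sum_product)
  also have "\<dots> = (\<Sum>k\<in>?K. \<Sum>i\<in>A. u i * v (k - i))"
    by (rule sum.swap)
  finally show ?thesis .
qed

lemma ideal_zero: "is_ideal I \<Longrightarrow> 0 \<in> I"
  unfolding is_ideal_def by blast

lemma ideal_add: "is_ideal I \<Longrightarrow> x \<in> I \<Longrightarrow> y \<in> I \<Longrightarrow> x + y \<in> I"
  unfolding is_ideal_def by blast

lemma ideal_mult_left: "is_ideal I \<Longrightarrow> x \<in> I \<Longrightarrow> r * x \<in> I"
  unfolding is_ideal_def by blast

lemma ideal_mult_right: "is_ideal I \<Longrightarrow> x \<in> I \<Longrightarrow> x * r \<in> I"
  unfolding is_ideal_def by (metis mult.commute)

lemma ideal_diff: "is_ideal I \<Longrightarrow> x \<in> I \<Longrightarrow> y \<in> I \<Longrightarrow> x - y \<in> I"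
  using ideal_add[of I x "(-1) * y"] ideal_mult_left[of I y "-1"] by simp

lemma ideal_sum:
  assumes "is_ideal I" "\<And>i. i \<in> F \<Longrightarrow> f i \<in> I"
  shows "sum f F \<in> I"
  using assms(2)
  by (induction F rule: infinite_finite_induct) (auto intro: ideal_zero ideal_add assms(1))

lemma zero_prime_ideal: "prime_ideal {0 :: 'a::idom}"
proof -
  have "(1::'a) \<notin> {0}" by simp
  then have "{0::'a} \<noteq> UNIV" by blast
  then show ?thesis unfolding prime_ideal_def is_ideal_def by simp
qed

lemma prime_chain_to_two:
  fixes P Q :: "'a::idom set"
  assumes "prime_ideal Q" "prime_ideal P" "{0} \<subset> Q" "Q \<subset> P"
  shows "prime_chain_to P 2"
  unfolding prime_chain_to_def
proof (intro exI[of _ "\<lambda>n. [{0}, Q, P] ! n"] conjI allI impI)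
  fix i :: nat
  show "i \<le> 2 \<Longrightarrow> prime_ideal ([{0}, Q, P] ! i)"
    using assms(1,2) zero_prime_ideal by (auto simp: le_Suc_eq numeral_2_eq_2)
  show "i < 2 \<Longrightarrow> [{0}, Q, P] ! i \<subset> [{0}, Q, P] ! Suc i"
    using assms(3,4) by (auto simp: less_Suc_eq numeral_2_eq_2)
qed simp

lemma graded_zero: "graded_domain G \<Longrightarrow> 0 \<in> G i"
  unfolding graded_domain_def by blast

lemma graded_add: "graded_domain G \<Longrightarrow> x \<in> G i \<Longrightarrow> y \<in> G i \<Longrightarrow> x + y \<in> G i"
  unfolding graded_domain_def by blast

lemma graded_mult: "graded_domain G \<Longrightarrow> x \<in> G i \<Longrightarrow> y \<in> G j \<Longrightarrow> x * y \<in> G (i + j)"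
  unfolding graded_domain_def by blast

lemma graded_sum:
  assumes "graded_domain G" "\<And>i. i \<in> F \<Longrightarrow> f i \<in> G k"
  shows "sum f F \<in> G k"
  using assms(2)
  by (induction F rule: infinite_finite_induct) (auto intro: graded_zero graded_add assms(1))

lemma graded_unique_decomposition:
  assumes "graded_domain G"
  shows "\<exists>!f. finite {i. f i \<noteq> 0} \<and> (\<forall>i. f i \<in> G i) \<and> x = sum f {i. f i \<noteq> 0}"
proof -
  have "\<forall>x. \<exists>!f. finite {i. f i \<noteq> 0} \<and> (\<forall>i. f i \<in> G i) \<and> x = sum f {i. f i \<noteq> 0}"
    using assms unfolding graded_domain_def by (elim conjE)
  then show ?thesis by (rule spec)
qed

lemma hcomp_decomposition:
  assumes "graded_domain G"
  shows "finite {i. hcomp G x i \<noteq> 0}" and "hcomp G x i \<in> G i"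
    and "sum (hcomp G x) {i. hcomp G x i \<noteq> 0} = x"
  using theI'[OF graded_unique_decomposition[OF assms, of x]] unfolding hcomp_def by auto

lemma hcomp_sum_superset:
  assumes "graded_domain G" "finite A" "{i. hcomp G x i \<noteq> 0} \<subseteq> A"
  shows "sum (hcomp G x) A = x"
proof -
  have "sum (hcomp G x) {i. hcomp G x i \<noteq> 0} = sum (hcomp G x) A"
    by (rule sum.mono_neutral_left[OF assms(2,3)]) auto
  then show ?thesis using hcomp_decomposition(3)[OF assms(1)] by simp
qed

lemma hcomp_unique:
  assumes "graded_domain G" "finite F" "\<And>i. f i \<in> G i" "\<And>i. i \<notin> F \<Longrightarrow> f i = 0"
    and "sum f F = x"
  shows "hcomp G x = f"
proof -
  have supp: "{i. f i \<noteq> 0} \<subseteq> F" using assms(4) by auto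
  have "sum f {i. f i \<noteq> 0} = sum f F"
    by (rule sum.mono_neutral_left[OF assms(2) supp]) auto
  then have "finite {i. f i \<noteq> 0} \<and> (\<forall>i. f i \<in> G i) \<and> x = sum f {i. f i \<noteq> 0}"
    using finite_subset[OF supp assms(2)] assms(3,5) by simp
  then show ?thesis
    unfolding hcomp_def by (rule the1_equality[OF graded_unique_decomposition[OF assms(1)]])
qed

lemma hcomp_homogeneous:
  assumes "graded_domain G" "x \<in> G i"
  shows "hcomp G x = (\<lambda>j. if j = i then x else 0)"
  by (rule hcomp_unique[OF assms(1), of "{i}"]) (auto simp: assms graded_zero)

lemma hcomp_add:
  assumes "graded_domain G"
  shows "hcomp G (x + y) = (\<lambda>i. hcomp G x i + hcomp G y i)"
proof (rule hcomp_unique[OF assms])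
  let ?F = "{i. hcomp G x i \<noteq> 0} \<union> {i. hcomp G y i \<noteq> 0}"
  show "finite ?F" using hcomp_decomposition(1)[OF assms] by blast
  then show "(\<Sum>i\<in>?F. hcomp G x i + hcomp G y i) = x + y"
    by (simp add: sum.distrib hcomp_sum_superset[OF assms])
  show "hcomp G x i + hcomp G y i \<in> G i" for i
    by (intro graded_add[OF assms] hcomp_decomposition(2)[OF assms])
qed auto

lemma hcomp_mult:
  assumes "graded_domain G" "finite A" "{i. hcomp G a i \<noteq> 0} \<subseteq> A"
  shows "hcomp G (a * b) k = (\<Sum>i\<in>A. hcomp G a i * hcomp G b (k - i))"
proof -
  let ?B = "{j. hcomp G b j \<noteq> 0}"
  let ?K = "(\<lambda>(i, j). i + j) ` (A \<times> ?B)"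
  define f where "f k = (\<Sum>i\<in>A. hcomp G a i * hcomp G b (k - i))" for k
  have "hcomp G (a * b) = f"
  proof (rule hcomp_unique[OF assms(1)])
    show "finite ?K" using assms(2) hcomp_decomposition(1)[OF assms(1)] by simp
    show "f k \<in> G k" for k
      unfolding f_def
    proof (rule graded_sum[OF assms(1)])
      fix i
      have "hcomp G a i * hcomp G b (k - i) \<in> G (i + (k - i))"
        by (intro graded_mult[OF assms(1)] hcomp_decomposition(2)[OF assms(1)])
      then show "hcomp G a i * hcomp G b (k - i) \<in> G k" by simp
    qed
    show "f k = 0" if "k \<notin> ?K" for k
    proof -
      have "hcomp G b (k - i) = 0" if "i \<in> A" for i
      proof (rule ccontr)
        assume "hcomp G b (k - i) \<noteq> 0"
        then have "(i, k - i) \<in> A \<times> ?B" using that by simp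
        then have "k \<in> ?K" by (rule rev_image_eqI) simp
        then show False using \<open>k \<notin> ?K\<close> by contradiction
      qed
      then show ?thesis unfolding f_def by simp
    qed
    have "a * b = sum (hcomp G a) A * sum (hcomp G b) ?B"
      using hcomp_sum_superset[OF assms] hcomp_decomposition(3)[OF assms(1)] by simp
    also have "\<dots> = sum f ?K"
      unfolding f_def
      by (rule sum_product_convolution[OF assms(2) hcomp_decomposition(1)[OF assms(1)]]) simp
    finally show "sum f ?K = a * b" by simp
  qed
  then show ?thesis unfolding f_def by simp
qed

text \<open>The largest homogeneous ideal contained in P, usually written P*.\<close>

definition homogeneous_core :: "(int \<Rightarrow> 'a::idom set) \<Rightarrow> 'a set \<Rightarrow> 'a set" where
  "homogeneous_core G P = {x. \<forall>i. hcomp G x i \<in> P}"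

lemma homogeneous_core_subset:
  assumes "graded_domain G" "is_ideal P"
  shows "homogeneous_core G P \<subseteq> P"
proof
  fix x assume "x \<in> homogeneous_core G P"
  then have "sum (hcomp G x) {i. hcomp G x i \<noteq> 0} \<in> P"
    unfolding homogeneous_core_def by (intro ideal_sum[OF assms(2)]) auto
  then show "x \<in> P" using hcomp_decomposition(3)[OF assms(1)] by simp
qed

lemma homogeneous_in_core:
  assumes "graded_domain G" "is_ideal P" "x \<in> G i" "x \<in> P"
  shows "x \<in> homogeneous_core G P"
  unfolding homogeneous_core_def using hcomp_homogeneous[OF assms(1,3)] assms(4) ideal_zero[OF assms(2)]
  by auto

lemma homogeneous_core_ideal:
  assumes "graded_domain G" "is_ideal P"
  shows "is_ideal (homogeneous_core G P)"
  unfolding is_ideal_def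
proof (intro conjI ballI allI)
  show "0 \<in> homogeneous_core G P"
    using homogeneous_in_core[OF assms graded_zero[OF assms(1)] ideal_zero[OF assms(2)]] .
  show "x + y \<in> homogeneous_core G P" if "x \<in> homogeneous_core G P" "y \<in> homogeneous_core G P" for x y
    using that unfolding homogeneous_core_def by (simp add: hcomp_add[OF assms(1)] ideal_add[OF assms(2)])
  show "r * x \<in> homogeneous_core G P" if "x \<in> homogeneous_core G P" for x r
    unfolding homogeneous_core_def
  proof (intro CollectI allI)
    fix k
    have "hcomp G (x * r) k = (\<Sum>i\<in>{i. hcomp G x i \<noteq> 0}. hcomp G x i * hcomp G r (k - i))"
      by (rule hcomp_mult[OF assms(1) hcomp_decomposition(1)[OF assms(1)] subset_refl])
    moreover have "(\<Sum>i\<in>{i. hcomp G x i \<noteq> 0}. hcomp G x i * hcomp G r (k - i)) \<in> P"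
      using that unfolding homogeneous_core_def
      by (intro ideal_sum[OF assms(2)] ideal_mult_right[OF assms(2)]) simp
    ultimately show "hcomp G (r * x) k \<in> P" by (simp add: mult.commute)
  qed
qed

lemma homogeneous_ideal_homogeneous_core:
  assumes "graded_domain G" "is_ideal P"
  shows "homogeneous_ideal G (homogeneous_core G P)"
  unfolding homogeneous_ideal_def
proof (intro conjI homogeneous_core_ideal[OF assms] ballI allI)
  fix x i assume "x \<in> homogeneous_core G P"
  then have "hcomp G x i \<in> P" unfolding homogeneous_core_def by simp
  then show "hcomp G x i \<in> homogeneous_core G P"
    by (rule homogeneous_in_core[OF assms hcomp_decomposition(2)[OF assms(1)]])
qed

lemma hcomp_mult_top_modulo:
  assumes "graded_domain G" "is_ideal P"
    and "\<And>i. i > i0 \<Longrightarrow> hcomp G a i \<in> P" and "\<And>j. j > j0 \<Longrightarrow> hcomp G b j \<in> P"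
  shows "hcomp G (a * b) (i0 + j0) - hcomp G a i0 * hcomp G b j0 \<in> P"
proof -
  let ?S = "{i. hcomp G a i \<noteq> 0}"
  let ?t = "\<lambda>i. hcomp G a i * hcomp G b (i0 + j0 - i)"
  have fin: "finite ?S" using hcomp_decomposition(1)[OF assms(1)] .
  have "hcomp G (a * b) (i0 + j0) = sum ?t (insert i0 ?S)"
    by (rule hcomp_mult[OF assms(1)]) (use fin in auto)
  also have "\<dots> = ?t i0 + sum ?t (?S - {i0})"
    by (rule sum.insert_remove[OF fin])
  finally have "hcomp G (a * b) (i0 + j0) = ?t i0 + sum ?t (?S - {i0})" .
  moreover have "sum ?t (?S - {i0}) \<in> P"
  proof (rule ideal_sum[OF assms(2)])
    fix i assume "i \<in> ?S - {i0}"
    then consider "i > i0" | "i < i0" by fastforce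
    then show "?t i \<in> P"
    proof cases
      case 1
      then show ?thesis using assms(3) ideal_mult_right[OF assms(2)] by blast
    next
      case 2
      then have "i0 + j0 - i > j0" by simp
      then show ?thesis using assms(4) ideal_mult_left[OF assms(2)] by blast
    qed
  qed
  ultimately show ?thesis by simp
qed

lemma prime_ideal_homogeneous_core:
  assumes "graded_domain G" "prime_ideal P"
  shows "prime_ideal (homogeneous_core G P)"
proof -
  have P: "is_ideal P" "P \<noteq> UNIV" "\<And>a b. a * b \<in> P \<Longrightarrow> a \<in> P \<or> b \<in> P"
    using assms(2) unfolding prime_ideal_def by auto
  have "a \<in> homogeneous_core G P \<or> b \<in> homogeneous_core G P"
    if ab: "a * b \<in> homogeneous_core G P" for a b
  proof (rule ccontr)
    let ?Da = "{i. hcomp G a i \<notin> P}" and ?Db = "{j. hcomp G b j \<notin> P}"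
    assume "\<not> ?thesis"
    then have ne: "?Da \<noteq> {}" "?Db \<noteq> {}" unfolding homogeneous_core_def by auto
    have fin_a: "finite ?Da"
      by (rule finite_subset[OF _ hcomp_decomposition(1)[OF assms(1), of a]])
        (use ideal_zero[OF P(1)] in auto)
    have fin_b: "finite ?Db"
      by (rule finite_subset[OF _ hcomp_decomposition(1)[OF assms(1), of b]])
        (use ideal_zero[OF P(1)] in auto)
    have top: "hcomp G a (Max ?Da) \<notin> P" "hcomp G b (Max ?Db) \<notin> P"
      using Max_in[OF fin_a ne(1)] Max_in[OF fin_b ne(2)] by simp_all
    have above_a: "hcomp G a i \<in> P" if "i > Max ?Da" for i
      using Max_ge[OF fin_a, of i] that by (meson leD mem_Collect_eq)
    have above_b: "hcomp G b j \<in> P" if "j > Max ?Db" for j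
      using Max_ge[OF fin_b, of j] that by (meson leD mem_Collect_eq)
    have "hcomp G (a * b) (Max ?Da + Max ?Db) \<in> P"
      using ab unfolding homogeneous_core_def by simp
    moreover have "hcomp G (a * b) (Max ?Da + Max ?Db) - hcomp G a (Max ?Da) * hcomp G b (Max ?Db) \<in> P"
      by (rule hcomp_mult_top_modulo[OF assms(1) P(1) above_a above_b])
    ultimately have "hcomp G a (Max ?Da) * hcomp G b (Max ?Db) \<in> P"
      using ideal_diff[OF P(1)] by fastforce
    then show False using P(3) top by blast
  qed
  moreover have "homogeneous_core G P \<noteq> UNIV"
    using homogeneous_core_subset[OF assms(1) P(1)] P(2) by auto
  ultimately show ?thesis
    unfolding prime_ideal_def using homogeneous_core_ideal[OF assms(1) P(1)] by blast
qed

lemma height_one_homogeneous: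
  assumes "graded_domain G" "height_one P" "x \<in> P" "x \<in> G i" "x \<noteq> 0"
  shows "homogeneous_ideal G P"
proof -
  have P: "prime_ideal P" "is_ideal P" using assms(2) unfolding height_one_def prime_ideal_def by auto
  let ?Q = "homogeneous_core G P"
  have "?Q = P"
  proof (rule ccontr)
    assume "?Q \<noteq> P"
    then have "?Q \<subset> P" using homogeneous_core_subset[OF assms(1) P(2)] by blast
    moreover have "{0} \<subset> ?Q"
      using homogeneous_in_core[OF assms(1) P(2) assms(4,3)] assms(5)
        ideal_zero[OF homogeneous_core_ideal[OF assms(1) P(2)]] by blast
    ultimately have "prime_chain_to P 2"
      using prime_chain_to_two prime_ideal_homogeneous_core[OF assms(1) P(1)] P(1) by blast
    then show False using assms(2) unfolding height_one_def by blast
  qed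
  then show ?thesis using homogeneous_ideal_homogeneous_core[OF assms(1) P(2)] by simp
qed

lemma degree_not_in_prime_add:
  assumes "graded_domain G" "prime_ideal P" "\<not> G a \<subseteq> P" "\<not> G b \<subseteq> P"
  shows "\<not> G (a + b) \<subseteq> P"
proof -
  obtain x y where "x \<in> G a" "x \<notin> P" "y \<in> G b" "y \<notin> P" using assms(3,4) by blast
  moreover have "x * y \<notin> P" using calculation assms(2) unfolding prime_ideal_def by blast
  ultimately show ?thesis using graded_mult[OF assms(1)] by blast
qed

lemma X_set_subset_prime_iff:
  assumes "graded_domain G" "prime_ideal P" "d \<ge> 2"
  shows "X_set G d \<subseteq> P \<longleftrightarrow> \<not> coprime (e_quot G P) (int d)"
proof
  let ?T = "{i. \<not> G i \<subseteq> P}"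
  assume X: "X_set G d \<subseteq> P"
  show "\<not> coprime (e_quot G P) (int d)"
  proof
    assume cop: "coprime (e_quot G P) (int d)"
    have "?T \<noteq> {}"
    proof
      assume "?T = {}"
      then have "coprime 0 (int d)" using cop unfolding e_quot_def by simp
      then show False using assms(3) by simp
    qed
    moreover have "a + b \<in> ?T" if "a \<in> ?T" "b \<in> ?T" for a b
      using degree_not_in_prime_add[OF assms(1,2)] that by simp
    ultimately obtain s where "s \<in> ?T" "coprime s (int d)"
      using semigroup_contains_coprime[of ?T "int d"] cop assms(3) unfolding e_quot_def by auto
    then obtain y where "y \<in> G s" "y \<notin> P" "coprime s (int d)" by blast
    moreover have "0 \<in> P" using assms(2) unfolding prime_ideal_def is_ideal_def by blast
    ultimately have "y \<in> X_set G d" "y \<notin> P" unfolding X_set_def by auto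
    then show False using X by blast
  qed
next
  assume not_cop: "\<not> coprime (e_quot G P) (int d)"
  show "X_set G d \<subseteq> P"
  proof
    fix x assume "x \<in> X_set G d"
    then obtain i where i: "x \<in> G i" "coprime i (int d)" unfolding X_set_def by blast
    show "x \<in> P"
    proof (rule ccontr)
      assume "x \<notin> P"
      then have "e_quot G P dvd i" unfolding e_quot_def using i(1) by (blast intro: Gcd_dvd)
      then show False using not_cop i(2) coprime_divisors dvd_refl by blast
    qed
  qed
qed

lemma Pi_star_iff_coprime:
  assumes "d > 0"
  shows "d \<in> Pi_star G \<longleftrightarrow>
    (\<forall>P. homogeneous_ideal G P \<and> height_one P \<longrightarrow> coprime (e_quot G P) (int d))"
  using assms coprime_int_iff_no_common_prime_divisor[of d]
  unfolding Pi_star_def Pi_set_def by auto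

theorem lemma3p10:
  fixes G :: "int \<Rightarrow> 'a::idom set" and d :: nat
  assumes "graded_domain G"
    and "e_grad G = 1"
    and "d \<ge> 2"
  shows "X_set G d \<noteq> {}
    \<and> ((\<not> (\<exists>P. height_one P \<and> X_set G d \<subseteq> P))
         \<longleftrightarrow> (\<forall>P. homogeneous_ideal G P \<and> height_one P \<longrightarrow> gcd (e_quot G P) (int d) = 1))
    \<and> ((\<forall>P. homogeneous_ideal G P \<and> height_one P \<longrightarrow> gcd (e_quot G P) (int d) = 1)
         \<longleftrightarrow> d \<in> Pi_star G)"
proof -
  have "{i. \<not> G i \<subseteq> {0}} = {i. G i \<noteq> {0}}" using graded_zero[OF assms(1)] by blast
  then have "e_quot G {0} = e_grad G" unfolding e_quot_def e_grad_def by simp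
  then have "\<not> X_set G d \<subseteq> {0}"
    using X_set_subset_prime_iff[OF assms(1) zero_prime_ideal assms(3)] assms(2) by simp
  then obtain x i where x: "x \<in> X_set G d" "x \<in> G i" "x \<noteq> 0" unfolding X_set_def by blast
  have X_subset_iff: "X_set G d \<subseteq> P \<longleftrightarrow> gcd (e_quot G P) (int d) \<noteq> 1" if "height_one P" for P
  proof -
    have "prime_ideal P" using that unfolding height_one_def by simp
    then show ?thesis
      using X_set_subset_prime_iff[OF assms(1) _ assms(3)] by (simp add: coprime_iff_gcd_eq_1)
  qed
  have X_subset_homogeneous: "homogeneous_ideal G P" if "height_one P" "X_set G d \<subseteq> P" for P
    using height_one_homogeneous[OF assms(1) that(1) _ x(2,3)] that(2) x(1) by blast
  have "(\<not> (\<exists>P. height_one P \<and> X_set G d \<subseteq> P))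
         \<longleftrightarrow> (\<forall>P. homogeneous_ideal G P \<and> height_one P \<longrightarrow> gcd (e_quot G P) (int d) = 1)"
    using X_subset_iff X_subset_homogeneous by blast
  moreover have "(\<forall>P. homogeneous_ideal G P \<and> height_one P \<longrightarrow> gcd (e_quot G P) (int d) = 1)
         \<longleftrightarrow> d \<in> Pi_star G"
    using Pi_star_iff_coprime[of d G] assms(3) by (simp add: coprime_iff_gcd_eq_1)
  ultimately show ?thesis using x(1) by blast
qed

end
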